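(* Let $n\in\{2,3\}$. (i) Let $u:[2,\infty)\times\mathbb{R}^n\to\mathbb{R}$ and $\phi,\tilde\phi:[2,\infty)\times\mathbb{R}^n\to\mathbb{C}^{N_0}$ be sufficiently smooth. Then for every multi-index $I\in\mathbb{N}^{n_0}$, $$\widehat{\Gamma}^I(u\phi)=\sum_{I_1+I_2=I}\binom{I}{I_1}(\Gamma^{I_1}u)(\widehat{\Gamma}^{I_2}\phi),\qquad \Gamma^I(\phi^*\gamma^0\tilde{\phi})=\sum_{I_1+I_2=I}\binom{I}{I_1}(\widehat{\Gamma}^{I_1}\phi)^*\gamma^0(\widehat{\Gamma}^{I_2}\tilde{\phi}),$$ and, with constants depending only on $n$, $$|\phi^{*}\gamma^0\tilde{\phi}|\lesssim|[\phi]_{-}|\,|\tilde{\phi}|+|\phi|\,|[\tilde{\phi}]_{-}|\quad\text{everywhere (with } r\neq0),$$ $$|\phi^{*}\gamma^0\tilde{\phi}|\lesssim|(\phi)_{-}|\,|\tilde{\phi}|+|\phi|\,|(\tilde{\phi})_{-}|+\frac{|t^2-r^2|}{t^2}|\phi|\,|\tilde{\phi}|\quad\text{in }\{r<t\}.$$ (ii) For any sufficiently smooth $\phi:[2,\infty)\times\mathbb{R}^n\to\mathbb{C}^{N_0}$, setting $\tilde\phi:=i\gamma^\mu\partial_\mu\phi$, one has $|[\tilde{\phi}]_{-}|\lesssim|G\phi|$.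
   Context: $N_0=2$ ($n=2$), $N_0=4$ ($n=3$); $g=\mathrm{diag}(-1,1,\dots,1)$; Dirac matrices $\gamma^\mu$ ($N_0\times N_0$) satisfy $\gamma^\mu\gamma^\nu+\gamma^\nu\gamma^\mu=-2g^{\mu\nu}I$, $(\gamma^\mu)^*=-g_{\mu\nu}\gamma^\nu$; summation convention. $r=|x|$. $\partial_\alpha$, $L_a=x_a\partial_t+t\partial_a$, $\Omega_{ab}=x_a\partial_b-x_b\partial_a$; modified fields $\widehat L_a=L_a-\frac12\gamma^0\gamma^a$, $\widehat\Omega_{ab}=\Omega_{ab}-\frac12\gamma^a\gamma^b$. $n_0=(n^2+3n+2)/2$; ordered sets $\{\Gamma_k\}=\{(\partial_\alpha)_{0\le\alpha\le n},(L_a),(\Omega_{ab})_{a<b}\}$ and $\{\widehat\Gamma_k\}=\{(\partial_\alpha),(\widehat L_a),(\widehat\Omega_{ab})_{a<b}\}$; for $I=(i_1,\dots,i_{n_0})$, $\Gamma^I=\prod_k\Gamma_k^{i_k}$, $\widehat\Gamma^I=\prod_k\widehat\Gamma_k^{i_k}$ (fixed order), $\binom{I}{I_1}=\prod_k\binom{i_k}{j_k}$ for $I_1=(j_k)$, and the sums run over pairs of multi-indices with $I_1+I_2=I$ componentwise. $[\phi]_-=\phi-\frac{x_a}{r}\gamma^0\gamma^a\phi$, $(\phi)_-=\phi-\frac{x_a}{t}\gamma^0\gamma^a\phi$, $G_a=\partial_a+\frac{x_a}{r}\partial_t$, $|G\phi|=(\sum_a|G_a\phi|^2)^{1/2}$.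 *)

theory Defs
  imports "HOL-Analysis.Analysis"
begin

text \<open>Spacetime points are pairs (t, x) with x in real^'n; spinors are complex^'m;
  complex matrices are complex^'m^'m.\<close>

type_synonym 'n pt = "real \<times> (real ^ 'n)"

definition N0 :: "nat \<Rightarrow> nat" where
  "N0 n = (if n = 2 then 2 else 4)"

definition n0 :: "nat \<Rightarrow> nat" where
  "n0 n = (n^2 + 3*n + 2) div 2"

definition dderiv :: "'a::real_normed_vector \<Rightarrow> ('a \<Rightarrow> 'b::real_normed_vector) \<Rightarrow> 'a \<Rightarrow> 'b" where
  "dderiv v f p = vector_derivative (\<lambda>s. f (p + s *\<^sub>R v)) (at 0)"

coinductive smooth_on :: "'a::real_normed_vector set \<Rightarrow> ('a \<Rightarrow> 'b::real_normed_vector) \<Rightarrow> bool" where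
  "f differentiable_on U \<Longrightarrow> (\<forall>v. smooth_on U (dderiv v f)) \<Longrightarrow> smooth_on U f"

definition dt :: "('n::finite pt \<Rightarrow> 'b::real_normed_vector) \<Rightarrow> 'n pt \<Rightarrow> 'b" where
  "dt f = dderiv (1, 0) f"

definition dx :: "'n::finite \<Rightarrow> ('n pt \<Rightarrow> 'b::real_normed_vector) \<Rightarrow> 'n pt \<Rightarrow> 'b" where
  "dx a f = dderiv (0, axis a 1) f"

datatype 'n vf = VT | VX 'n | VL 'n | VO 'n 'n

fun vf_app :: "'n::finite vf \<Rightarrow> ('n pt \<Rightarrow> 'b::real_normed_vector) \<Rightarrow> 'n pt \<Rightarrow> 'b" where
  "vf_app VT f p = dt f p"
| "vf_app (VX a) f p = dx a f p"
| "vf_app (VL a) f p = (snd p $ a) *\<^sub>R dt f p + fst p *\<^sub>R dx a f p"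
| "vf_app (VO a b) f p = (snd p $ a) *\<^sub>R dx b f p - (snd p $ b) *\<^sub>R dx a f p"

fun hvf_app :: "complex^'m^'m \<Rightarrow> ('n::finite \<Rightarrow> complex^'m^'m) \<Rightarrow> 'n vf
    \<Rightarrow> ('n pt \<Rightarrow> complex^'m) \<Rightarrow> 'n pt \<Rightarrow> complex^'m" where
  "hvf_app g0 g (VL a) f p = vf_app (VL a) f p - (1/2::real) *\<^sub>R ((g0 ** g a) *v f p)"
| "hvf_app g0 g (VO a b) f p = vf_app (VO a b) f p - (1/2::real) *\<^sub>R ((g a ** g b) *v f p)"
| "hvf_app g0 g v f p = vf_app v f p"

definition vf_list :: "'n::{finite,linorder} vf list" where
  "vf_list = (let xs = sorted_list_of_set (UNIV :: 'n set) in
     [VT] @ map VX xs @ map VL xs @ [VO a b. a \<leftarrow> xs, b \<leftarrow> xs, a < b])"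

definition GamI :: "nat list \<Rightarrow> ('n::{finite,linorder} pt \<Rightarrow> 'b::real_normed_vector) \<Rightarrow> 'n pt \<Rightarrow> 'b" where
  "GamI I f = foldr (\<lambda>(v, i) h. (vf_app v ^^ i) h) (zip vf_list I) f"

definition hGamI :: "complex^'m^'m \<Rightarrow> ('n::{finite,linorder} \<Rightarrow> complex^'m^'m) \<Rightarrow> nat list
    \<Rightarrow> ('n pt \<Rightarrow> complex^'m) \<Rightarrow> 'n pt \<Rightarrow> complex^'m" where
  "hGamI g0 g I f = foldr (\<lambda>(v, i) h. (hvf_app g0 g v ^^ i) h) (zip vf_list I) f"

text \<open>Multi-indices I1 with I1 \<le> I componentwise (then I2 = I - I1), and binomials.\<close>
definition subidx :: "nat list \<Rightarrow> nat list set" where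
  "subidx I = {J. length J = length I \<and> (\<forall>k<length I. J ! k \<le> I ! k)}"

definition idx_diff :: "nat list \<Rightarrow> nat list \<Rightarrow> nat list" where
  "idx_diff I J = map2 (-) I J"

definition mbinom :: "nat list \<Rightarrow> nat list \<Rightarrow> nat" where
  "mbinom I J = (\<Prod>k<length I. (I ! k) choose (J ! k))"

definition adj :: "complex^'m^'m \<Rightarrow> complex^'m^'m" where
  "adj M = (\<chi> i j. cnj (M $ j $ i))"

definition bar :: "complex^'m^'m \<Rightarrow> complex^'m \<Rightarrow> complex^'m \<Rightarrow> complex" where
  "bar g0 u w = (\<Sum>i\<in>UNIV. cnj (u $ i) * ((g0 *v w) $ i))"

text \<open>Dirac matrices: anticommutation with g = diag(-1,1,..,1) and hermiticity relations.\<close>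
definition dirac :: "complex^'m^'m \<Rightarrow> ('n::finite \<Rightarrow> complex^'m^'m) \<Rightarrow> bool" where
  "dirac g0 g \<longleftrightarrow>
     g0 ** g0 + g0 ** g0 = 2 *\<^sub>R mat 1 \<and>
     (\<forall>a. g0 ** g a + g a ** g0 = 0) \<and>
     (\<forall>a b. g a ** g b + g b ** g a = (if a = b then -2 *\<^sub>R mat 1 else 0)) \<and>
     adj g0 = g0 \<and> (\<forall>a. adj (g a) = - g a)"

definition rad :: "'n::finite pt \<Rightarrow> real" where
  "rad p = norm (snd p)"

definition minus_r :: "complex^'m^'m \<Rightarrow> ('n::finite \<Rightarrow> complex^'m^'m) \<Rightarrow> 'n pt \<Rightarrow> complex^'m \<Rightarrow> complex^'m" where
  "minus_r g0 g p w = w - (\<Sum>a\<in>UNIV. (snd p $ a / rad p) *\<^sub>R ((g0 ** g a) *v w))"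

definition minus_t :: "complex^'m^'m \<Rightarrow> ('n::finite \<Rightarrow> complex^'m^'m) \<Rightarrow> 'n pt \<Rightarrow> complex^'m \<Rightarrow> complex^'m" where
  "minus_t g0 g p w = w - (\<Sum>a\<in>UNIV. (snd p $ a / fst p) *\<^sub>R ((g0 ** g a) *v w))"

definition Gnorm :: "('n::finite pt \<Rightarrow> complex^'m) \<Rightarrow> 'n pt \<Rightarrow> real" where
  "Gnorm f p = sqrt (\<Sum>a\<in>UNIV. (norm (dx a f p + (snd p $ a / rad p) *\<^sub>R dt f p))^2)"

definition dirac_op :: "complex^'m^'m \<Rightarrow> ('n::finite \<Rightarrow> complex^'m^'m) \<Rightarrow> ('n pt \<Rightarrow> complex^'m) \<Rightarrow> 'n pt \<Rightarrow> complex^'m" where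
  "dirac_op g0 g f p = \<i> *s (g0 *v dt f p + (\<Sum>a\<in>UNIV. g a *v dx a f p))"

end

theory Submission
  imports Defs
begin

text \<open>
  Part (i) is a Leibniz rule. Each \<open>\<Gamma>\<^sub>k\<close> is a derivation, and the modified field differs from
  \<open>\<Gamma>\<^sub>k\<close> by a constant matrix \<open>-\<gamma>\<^sup>0\<gamma>\<^sup>a/2\<close> or \<open>-\<gamma>\<^sup>a\<gamma>\<^sup>b/2\<close> acting on spinors. On \<open>u\<phi>\<close> the
  matrix only hits \<open>\<phi>\<close>; on \<open>\<phi>\<^sup>*\<gamma>\<^sup>0\<psi>\<close> the two matrix terms cancel, because \<open>\<gamma>\<^sup>0\<gamma>\<^sup>a\<close> and
  \<open>\<gamma>\<^sup>a\<gamma>\<^sup>b\<close> (\<open>a \<noteq> b\<close>) are skew for the form \<open>\<phi>\<^sup>*\<gamma>\<^sup>0\<psi>\<close>. The binomial formula for powers of one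
  operator, followed by induction over the ordered product, gives the multi-index formula.

  Part (ii): for any real \<open>c\<close>, \<open>K = c\<^sub>a\<gamma>\<^sup>0\<gamma>\<^sup>a\<close> is skew for the form, so
  \<open>2 \<phi>\<^sup>*\<gamma>\<^sup>0\<psi> = (\<phi> - K\<phi>)\<^sup>*\<gamma>\<^sup>0\<psi> + \<phi>\<^sup>*\<gamma>\<^sup>0(\<psi> - K\<psi>)\<close>, and \<open>|\<phi>\<^sup>*\<gamma>\<^sup>0\<psi>| \<le> |\<phi>| |\<psi>|\<close> since
  \<open>\<gamma>\<^sup>0\<close> is unitary; this gives both bilinear estimates (the second one even without the
  \<open>|t\<^sup>2 - r\<^sup>2|\<close> term). For the Dirac operator write, with \<open>\<omega> = x/r\<close>,
  \<open>\<gamma>\<^sup>\<mu>\<partial>\<^sub>\<mu>\<phi> = \<gamma>\<^sup>a G\<^sub>a\<phi> + (\<gamma>\<^sup>0 - \<omega>\<^sub>b\<gamma>\<^sup>b) \<partial>\<^sub>t\<phi>\<close>: since \<open>(\<omega>\<^sub>a\<gamma>\<^sup>a)\<^sup>2 = -1\<close>, the second term is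
  fixed by \<open>K = \<omega>\<^sub>a\<gamma>\<^sup>0\<gamma>\<^sup>a\<close> and disappears from \<open>[\<cdot>]\<^sub>-\<close>.
\<close>

section \<open>Directional derivatives and smooth functions\<close>

definition agree_on :: "'a set \<Rightarrow> ('a \<Rightarrow> 'b) \<Rightarrow> ('a \<Rightarrow> 'b) \<Rightarrow> bool" where
  "agree_on U f g \<longleftrightarrow> (\<forall>p\<in>U. f p = g p)"

lemma agree_on_refl [simp]: "agree_on U f f"
  by (simp add: agree_on_def)

lemma agree_on_sym: "agree_on U f g \<Longrightarrow> agree_on U g f"
  by (simp add: agree_on_def)

lemma agree_on_trans [trans]: "agree_on U f g \<Longrightarrow> agree_on U g h \<Longrightarrow> agree_on U f h"
  by (simp add: agree_on_def)

lemma dderiv_eq_derivative: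
  assumes "(f has_derivative f') (at p)"
  shows "dderiv v f p = f' v"
proof -
  have "((\<lambda>s::real. p + s *\<^sub>R v) has_derivative (\<lambda>s. s *\<^sub>R v)) (at 0)"
    by (auto intro!: derivative_eq_intros)
  from diff_chain_at[OF this] assms
  have "((\<lambda>s. f (p + s *\<^sub>R v)) has_derivative (\<lambda>s. f' (s *\<^sub>R v))) (at 0)"
    by (simp add: o_def)
  moreover have "f' (s *\<^sub>R v) = s *\<^sub>R f' v" for s
    using has_derivative_bounded_linear[OF assms] by (simp add: linear_simps)
  ultimately have "((\<lambda>s. f (p + s *\<^sub>R v)) has_vector_derivative f' v) (at 0)"
    by (simp add: has_vector_derivative_def)
  then show ?thesis
    unfolding dderiv_def by (rule vector_derivative_at)
qed

lemma has_derivative_dderiv: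
  assumes "f differentiable (at p)"
  shows "(f has_derivative (\<lambda>v. dderiv v f p)) (at p)"
proof -
  obtain f' where f': "(f has_derivative f') (at p)"
    using assms by (auto simp: differentiable_def)
  moreover have "(\<lambda>v. dderiv v f p) = f'"
    using dderiv_eq_derivative[OF f'] by auto
  ultimately show ?thesis by simp
qed

lemma dderiv_const [simp]: "dderiv v (\<lambda>q. c) p = 0"
  using dderiv_eq_derivative[OF has_derivative_const] .

lemma agree_on_dderiv:
  assumes "open U" and "agree_on U f g"
  shows "agree_on U (dderiv v f) (dderiv v g)"
  unfolding agree_on_def
proof
  fix p assume "p \<in> U"
  have "open ((\<lambda>s::real. p + s *\<^sub>R v) -` U)"
    by (intro open_vimage \<open>open U\<close> continuous_intros)
  then have "eventually (\<lambda>s::real. p + s *\<^sub>R v \<in> U) (nhds 0)"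
    using \<open>p \<in> U\<close> by (auto simp: eventually_nhds)
  then have "eventually (\<lambda>s::real. s \<in> UNIV \<longrightarrow> f (p + s *\<^sub>R v) = g (p + s *\<^sub>R v)) (nhds 0)"
    by eventually_elim (use assms(2) in \<open>simp add: agree_on_def\<close>)
  then show "dderiv v f p = dderiv v g p"
    unfolding dderiv_def by (rule vector_derivative_cong_eq) auto
qed

lemma smooth_on_differentiable_on: "smooth_on U f \<Longrightarrow> f differentiable_on U"
  by (erule smooth_on.cases) auto

lemma smooth_on_dderiv: "smooth_on U f \<Longrightarrow> smooth_on U (dderiv v f)"
  by (erule smooth_on.cases) auto

lemma smooth_on_differentiable_at:
  "open U \<Longrightarrow> smooth_on U f \<Longrightarrow> p \<in> U \<Longrightarrow> f differentiable (at p)"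
  using differentiable_on_eq_differentiable_at smooth_on_differentiable_on by blast

lemma differentiable_on_agree:
  assumes "open U" and "f differentiable_on U" and "agree_on U f g"
  shows "g differentiable_on U"
  unfolding differentiable_on_eq_differentiable_at[OF \<open>open U\<close>]
proof
  fix p assume "p \<in> U"
  then have "f differentiable (at p)"
    using assms(1,2) differentiable_on_eq_differentiable_at by blast
  then obtain f' where "(f has_derivative f') (at p)"
    by (auto simp: differentiable_def)
  then have "(g has_derivative f') (at p)"
    by (rule has_derivative_transform_within_open[OF _ \<open>open U\<close> \<open>p \<in> U\<close>])
      (use assms(3) in \<open>simp add: agree_on_def\<close>)
  then show "g differentiable (at p)"
    by (auto simp: differentiable_def)
qed

lemma smooth_on_coinduct_agree:
  assumes "open U" and "X f"
    and step: "\<And>f. X f \<Longrightarrow> f differentiable_on U \<and>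
                 (\<forall>v. \<exists>h. (X h \<or> smooth_on U h) \<and> agree_on U (dderiv v f) h)"
  shows "smooth_on U f"
proof -
  define R where "R U' F \<longleftrightarrow> U' = U \<and> (\<exists>h. (X h \<or> smooth_on U h) \<and> agree_on U F h)" for U' F
  have "R U f"
    using \<open>X f\<close> by (auto simp: R_def)
  then show ?thesis
  proof (rule smooth_on.coinduct[where X=R])
    fix U' F assume "R U' F"
    then obtain h where U': "U' = U" and h: "X h \<or> smooth_on U h" and "agree_on U F h"
      by (auto simp: R_def)
    from \<open>agree_on U F h\<close> have Fh: "agree_on U h F"
      by (rule agree_on_sym)
    have "F differentiable_on U"
      using h step smooth_on_differentiable_on differentiable_on_agree[OF \<open>open U\<close> _ Fh] by blast
    moreover have "R U (dderiv v F) \<or> smooth_on U (dderiv v F)" for v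
    proof -
      have Fh': "agree_on U (dderiv v F) (dderiv v h)"
        by (rule agree_on_dderiv[OF \<open>open U\<close> agree_on_sym[OF Fh]])
      show ?thesis
      proof (cases "X h")
        case True
        then obtain h' where "X h' \<or> smooth_on U h'" and "agree_on U (dderiv v h) h'"
          using step by blast
        with Fh' show ?thesis
          by (auto simp: R_def intro: agree_on_trans)
      next
        case False
        with h have "smooth_on U (dderiv v h)"
          by (simp add: smooth_on_dderiv)
        with Fh' show ?thesis
          by (auto simp: R_def)
      qed
    qed
    ultimately show "\<exists>f U''. U' = U'' \<and> F = f \<and> f differentiable_on U'' \<and>
        (\<forall>v. R U'' (dderiv v f) \<or> smooth_on U'' (dderiv v f))"
      using U' by auto
  qed
qed

lemma smooth_on_const: "open U \<Longrightarrow> smooth_on U (\<lambda>p. c)"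
  by (rule smooth_on_coinduct_agree[where X="\<lambda>F. \<exists>c. F = (\<lambda>p. c)"])
    (auto simp: agree_on_def intro!: exI[of _ "\<lambda>p. 0"])

lemma smooth_on_add:
  assumes "open U" and "smooth_on U f" and "smooth_on U g"
  shows "smooth_on U (\<lambda>p. f p + g p)"
proof (rule smooth_on_coinduct_agree[OF \<open>open U\<close>,
      where X="\<lambda>F. \<exists>f g. smooth_on U f \<and> smooth_on U g \<and> F = (\<lambda>p. f p + g p)"])
  fix F assume "\<exists>f g. smooth_on U f \<and> smooth_on U g \<and> F = (\<lambda>p. f p + g p)"
  then obtain f g where f: "smooth_on U f" and g: "smooth_on U g" and F: "F = (\<lambda>p. f p + g p)"
    by blast
  have "F differentiable_on U"
    unfolding F using f g by (intro differentiable_on_add smooth_on_differentiable_on)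
  moreover have "agree_on U (dderiv v F) (\<lambda>p. dderiv v f p + dderiv v g p)" for v
    unfolding agree_on_def F
    using smooth_on_differentiable_at[OF \<open>open U\<close> f] smooth_on_differentiable_at[OF \<open>open U\<close> g]
    by (auto intro!: dderiv_eq_derivative has_derivative_add has_derivative_dderiv)
  ultimately show "F differentiable_on U \<and> (\<forall>v. \<exists>h. ((\<exists>f g. smooth_on U f \<and> smooth_on U g \<and>
      h = (\<lambda>p. f p + g p)) \<or> smooth_on U h) \<and> agree_on U (dderiv v F) h)"
    using smooth_on_dderiv[OF f] smooth_on_dderiv[OF g] by blast
qed (use assms in blast)

lemma smooth_on_linear:
  assumes "open U" and L: "bounded_linear L" and "smooth_on U f"
  shows "smooth_on U (\<lambda>p. L (f p))"
proof (rule smooth_on_coinduct_agree[OF \<open>open U\<close>, where X="\<lambda>F. \<exists>f. smooth_on U f \<and> F = (\<lambda>p. L (f p))"])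
  fix F assume "\<exists>f. smooth_on U f \<and> F = (\<lambda>p. L (f p))"
  then obtain f where f: "smooth_on U f" and F: "F = (\<lambda>p. L (f p))"
    by blast
  have F': "(F has_derivative (\<lambda>v. L (dderiv v f p))) (at p)" if "p \<in> U" for p
    unfolding F using smooth_on_differentiable_at[OF \<open>open U\<close> f that]
    by (intro bounded_linear.has_derivative[OF L] has_derivative_dderiv)
  then have "F differentiable_on U"
    by (blast intro: differentiable_at_imp_differentiable_on differentiableI)
  moreover have "agree_on U (dderiv v F) (\<lambda>p. L (dderiv v f p))" for v
    unfolding agree_on_def by (auto intro: dderiv_eq_derivative[OF F'])
  ultimately show "F differentiable_on U \<and> (\<forall>v. \<exists>h. ((\<exists>f. smooth_on U f \<and> h = (\<lambda>p. L (f p)))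
      \<or> smooth_on U h) \<and> agree_on U (dderiv v F) h)"
    using smooth_on_dderiv[OF f] by blast
qed (use assms in blast)

lemma smooth_on_bounded_linear:
  assumes "open U" and L: "bounded_linear L"
  shows "smooth_on U L"
proof (rule smooth_on_coinduct_agree[OF \<open>open U\<close>, where X="\<lambda>F. F = L"])
  have L': "(L has_derivative L) (at p)" for p
    using bounded_linear.has_derivative[OF L has_derivative_ident] by simp
  fix F assume "F = L"
  with L' have "F differentiable_on U" and "agree_on U (dderiv v F) (\<lambda>p. L v)" for v
    by (auto simp: bounded_linear_imp_differentiable_on[OF L] agree_on_def dderiv_eq_derivative)
  then show "F differentiable_on U \<and> (\<forall>v. \<exists>h. (h = L \<or> smooth_on U h) \<and> agree_on U (dderiv v F) h)"
    using smooth_on_const[OF \<open>open U\<close>] by blast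
qed simp

lemma smooth_on_diff:
  assumes "open U" and "smooth_on U f" and "smooth_on U g"
  shows "smooth_on U (\<lambda>p. f p - g p)"
  using smooth_on_add[OF \<open>open U\<close> assms(2)
      smooth_on_linear[OF \<open>open U\<close> bounded_linear_minus[OF bounded_linear_ident] assms(3)]]
  by simp

lemma has_derivative_bilinear_sum_list:
  assumes P: "bounded_bilinear P"
    and diff: "\<forall>(a, b)\<in>set fs. a differentiable (at p) \<and> b differentiable (at p)"
  shows "((\<lambda>q. sum_list (map (\<lambda>(a, b). P (a q) (b q)) fs)) has_derivative
      (\<lambda>v. sum_list (map (\<lambda>(a, b). P (dderiv v a p) (b p) + P (a p) (dderiv v b p)) fs))) (at p)"
  using diff
proof (induction fs)
  case Nil
  then show ?case by simp
next
  case (Cons ab fs)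
  obtain a b where ab: "ab = (a, b)" by fastforce
  have "((\<lambda>q. P (a q) (b q)) has_derivative (\<lambda>v. P (a p) (dderiv v b p) + P (dderiv v a p) (b p))) (at p)"
    using Cons.prems ab by (auto intro: bounded_bilinear.FDERIV[OF P] has_derivative_dderiv)
  from has_derivative_add[OF this Cons.IH] Cons.prems show ?case
    by (simp add: ab add.commute)
qed

text \<open>The derivative of a product is a sum of two products, so the coinduction invariant is the
  class of finite sums of products of smooth functions.\<close>

lemma smooth_on_bilinear:
  assumes "open U" and P: "bounded_bilinear P" and "smooth_on U f" and "smooth_on U g"
  shows "smooth_on U (\<lambda>p. P (f p) (g p))"
proof (rule smooth_on_coinduct_agree[OF \<open>open U\<close>, where X="\<lambda>F. \<exists>fs.
      (\<forall>(a, b)\<in>set fs. smooth_on U a \<and> smooth_on U b) \<and> F = (\<lambda>q. sum_list (map (\<lambda>(a, b). P (a q) (b q)) fs))"])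
  show "\<exists>fs. (\<forall>(a, b)\<in>set fs. smooth_on U a \<and> smooth_on U b) \<and>
      (\<lambda>p. P (f p) (g p)) = (\<lambda>q. sum_list (map (\<lambda>(a, b). P (a q) (b q)) fs))"
    using assms by (intro exI[of _ "[(f, g)]"]) auto
next
  fix F assume "\<exists>fs. (\<forall>(a, b)\<in>set fs. smooth_on U a \<and> smooth_on U b) \<and>
      F = (\<lambda>q. sum_list (map (\<lambda>(a, b). P (a q) (b q)) fs))"
  then obtain fs where fs: "\<forall>(a, b)\<in>set fs. smooth_on U a \<and> smooth_on U b"
    and F: "F = (\<lambda>q. sum_list (map (\<lambda>(a, b). P (a q) (b q)) fs))"
    by blast
  have F': "(F has_derivative (\<lambda>v. sum_list (map (\<lambda>(a, b). P (dderiv v a p) (b p) + P (a p) (dderiv v b p)) fs))) (at p)"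
    if "p \<in> U" for p
    unfolding F using fs
    by (intro has_derivative_bilinear_sum_list[OF P])
      (auto intro: smooth_on_differentiable_at[OF \<open>open U\<close> _ that])
  then have "F differentiable_on U"
    by (blast intro: differentiable_at_imp_differentiable_on differentiableI)
  moreover have "\<exists>h. ((\<exists>fs. (\<forall>(a, b)\<in>set fs. smooth_on U a \<and> smooth_on U b) \<and>
      h = (\<lambda>q. sum_list (map (\<lambda>(a, b). P (a q) (b q)) fs))) \<or> smooth_on U h) \<and> agree_on U (dderiv v F) h" for v
  proof (intro exI conjI disjI1)
    let ?fs' = "map (\<lambda>(a, b). (dderiv v a, b)) fs @ map (\<lambda>(a, b). (a, dderiv v b)) fs"
    show "\<forall>(a, b)\<in>set ?fs'. smooth_on U a \<and> smooth_on U b"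
      using fs by (auto simp: smooth_on_dderiv)
    show "agree_on U (dderiv v F) (\<lambda>q. sum_list (map (\<lambda>(a, b). P (a q) (b q)) ?fs'))"
      unfolding agree_on_def
      by (auto simp: dderiv_eq_derivative[OF F'] sum_list_addf o_def case_prod_unfold)
  qed (rule refl)
  ultimately show "F differentiable_on U \<and> (\<forall>v. \<exists>h. ((\<exists>fs. (\<forall>(a, b)\<in>set fs. smooth_on U a \<and> smooth_on U b) \<and>
      h = (\<lambda>q. sum_list (map (\<lambda>(a, b). P (a q) (b q)) fs))) \<or> smooth_on U h) \<and> agree_on U (dderiv v F) h)"
    by blast
qed

lemma smooth_on_sum_scaleR:
  assumes "open U" and "finite S" and "\<And>J. J \<in> S \<Longrightarrow> smooth_on U (F J)"
  shows "smooth_on U (\<lambda>p. \<Sum>J\<in>S. c J *\<^sub>R F J p)"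
  using assms(2,3)
proof (induction S rule: finite_induct)
  case empty
  then show ?case by (simp add: smooth_on_const[OF \<open>open U\<close>])
next
  case (insert J S)
  then have "smooth_on U (\<lambda>p. c J *\<^sub>R F J p)"
    by (intro smooth_on_linear[OF \<open>open U\<close> bounded_linear_scaleR_right]) auto
  with insert show ?case
    by (simp add: smooth_on_add[OF \<open>open U\<close>])
qed

lemma smooth_on_funpow:
  fixes T :: "('a::real_normed_vector \<Rightarrow> 'b::real_normed_vector) \<Rightarrow> 'a \<Rightarrow> 'b"
  assumes "\<And>f. smooth_on U f \<Longrightarrow> smooth_on U (T f)" and "smooth_on U f"
  shows "smooth_on U ((T ^^ i) f)"
  using assms(2) by (induction i) (simp_all add: assms(1))

section \<open>An abstract Leibniz rule\<close>

definition compose_powers :: "('v \<Rightarrow> 'f \<Rightarrow> 'f) \<Rightarrow> 'v list \<Rightarrow> nat list \<Rightarrow> 'f \<Rightarrow> 'f" where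
  "compose_powers T vs I f = foldr (\<lambda>(v, i) h. (T v ^^ i) h) (zip vs I) f"

lemma compose_powers_Nil [simp]:
  "compose_powers T [] I f = f"
  "compose_powers T vs [] f = f"
  by (simp_all add: compose_powers_def)

lemma compose_powers_Cons [simp]:
  "compose_powers T (v # vs) (i # I) f = (T v ^^ i) (compose_powers T vs I f)"
  by (simp add: compose_powers_def)

lemma GamI_eq_compose_powers: "GamI I f = compose_powers vf_app vf_list I f"
  by (simp add: GamI_def compose_powers_def)

lemma hGamI_eq_compose_powers: "hGamI g0 g I f = compose_powers (hvf_app g0 g) vf_list I f"
  by (simp add: hGamI_def compose_powers_def)

lemma smooth_on_compose_powers:
  assumes "\<And>v f. v \<in> set vs \<Longrightarrow> smooth_on U f \<Longrightarrow> smooth_on U (T v f)" and "smooth_on U f"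
  shows "smooth_on U (compose_powers T vs I f)"
  using assms
proof (induction vs arbitrary: I)
  case (Cons v vs)
  then show ?case
    by (cases I) (simp_all add: smooth_on_funpow)
qed simp

lemma subidx_Nil [simp]: "subidx [] = {[]}"
  by (auto simp: subidx_def)

lemma subidx_Cons: "subidx (i # I) = (\<lambda>(j, J). j # J) ` ({..i} \<times> subidx I)"
proof (rule set_eqI)
  fix K
  show "K \<in> subidx (i # I) \<longleftrightarrow> K \<in> (\<lambda>(j, J). j # J) ` ({..i} \<times> subidx I)"
  proof (cases K)
    case (Cons j J)
    have "(\<forall>k<length (i # I). (j # J) ! k \<le> (i # I) ! k) \<longleftrightarrow> j \<le> i \<and> (\<forall>k<length I. J ! k \<le> I ! k)"
      by (auto simp: less_Suc_eq_0_disj All_less_Suc2)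
    with Cons show ?thesis
      by (auto simp: subidx_def)
  qed (auto simp: subidx_def)
qed

lemma finite_subidx [simp]: "finite (subidx I)"
  by (induction I) (auto simp: subidx_Cons)

lemma mbinom_Nil [simp]: "mbinom [] [] = 1"
  by (simp add: mbinom_def)

lemma mbinom_Cons [simp]: "mbinom (i # I) (j # J) = (i choose j) * mbinom I J"
  unfolding mbinom_def length_Cons prod.lessThan_Suc_shift by simp

lemma idx_diff_Nil [simp]: "idx_diff [] [] = []"
  by (simp add: idx_diff_def)

lemma idx_diff_Cons [simp]: "idx_diff (i # I) (j # J) = (i - j) # idx_diff I J"
  by (simp add: idx_diff_def)

lemma sum_choose_pascal:
  fixes X :: "nat \<Rightarrow> nat \<Rightarrow> 'a::real_vector"
  shows "(\<Sum>j\<le>i. real (i choose j) *\<^sub>R (X (Suc j) (i - j) + X j (Suc i - j)))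
       = (\<Sum>j\<le>Suc i. real (Suc i choose j) *\<^sub>R X j (Suc i - j))"
proof -
  have shifted: "(\<Sum>j\<le>i. real (i choose j) *\<^sub>R X (Suc j) (i - j))
     = (\<Sum>j\<le>Suc i. (if j = 0 then 0 else real (i choose (j - 1))) *\<^sub>R X j (Suc i - j))"
    by (simp only: sum.atMost_Suc_shift) simp
  have extended: "(\<Sum>j\<le>i. real (i choose j) *\<^sub>R X j (Suc i - j))
     = (\<Sum>j\<le>Suc i. real (i choose j) *\<^sub>R X j (Suc i - j))"
    by (simp add: sum.atMost_Suc)
  have "(\<Sum>j\<le>i. real (i choose j) *\<^sub>R (X (Suc j) (i - j) + X j (Suc i - j)))
     = (\<Sum>j\<le>Suc i. ((if j = 0 then 0 else real (i choose (j - 1))) + real (i choose j)) *\<^sub>R X j (Suc i - j))"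
    unfolding scaleR_add_right scaleR_add_left sum.distrib shifted extended ..
  also have "\<dots> = (\<Sum>j\<le>Suc i. real (Suc i choose j) *\<^sub>R X j (Suc i - j))"
    by (intro sum.cong refl) (auto simp: gr0_conv_Suc)
  finally show ?thesis .
qed

text \<open>The operators are differential operators on functions that are only smooth on \<open>U\<close>, so all
  identities are stated up to agreement on \<open>U\<close>.\<close>

locale leibniz_rule =
  fixes U :: "'x::real_normed_vector set" and V :: "'v set"
    and A :: "'v \<Rightarrow> ('x \<Rightarrow> 'a::real_normed_vector) \<Rightarrow> 'x \<Rightarrow> 'a"
    and B :: "'v \<Rightarrow> ('x \<Rightarrow> 'b::real_normed_vector) \<Rightarrow> 'x \<Rightarrow> 'b"
    and C :: "'v \<Rightarrow> ('x \<Rightarrow> 'c::real_normed_vector) \<Rightarrow> 'x \<Rightarrow> 'c"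
    and P :: "'a \<Rightarrow> 'b \<Rightarrow> 'c"
  assumes open_U: "open U" and bilinear_P: "bounded_bilinear P"
    and smooth_A: "\<And>v f. v \<in> V \<Longrightarrow> smooth_on U f \<Longrightarrow> smooth_on U (A v f)"
    and smooth_B: "\<And>v f. v \<in> V \<Longrightarrow> smooth_on U f \<Longrightarrow> smooth_on U (B v f)"
    and smooth_C: "\<And>v f. v \<in> V \<Longrightarrow> smooth_on U f \<Longrightarrow> smooth_on U (C v f)"
    and agree_C: "\<And>v f g. agree_on U f g \<Longrightarrow> agree_on U (C v f) (C v g)"
    and add_C: "\<And>v f g. smooth_on U f \<Longrightarrow> smooth_on U g \<Longrightarrow>
        agree_on U (C v (\<lambda>p. f p + g p)) (\<lambda>p. C v f p + C v g p)"
    and scaleR_C: "\<And>v f c. smooth_on U f \<Longrightarrow> agree_on U (C v (\<lambda>p. c *\<^sub>R f p)) (\<lambda>p. c *\<^sub>R C v f p)"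
    and product_C: "\<And>v f g. v \<in> V \<Longrightarrow> smooth_on U f \<Longrightarrow> smooth_on U g \<Longrightarrow>
        agree_on U (C v (\<lambda>p. P (f p) (g p))) (\<lambda>p. P (A v f p) (g p) + P (f p) (B v g p))"
begin

lemma agree_on_funpow_C: "agree_on U f g \<Longrightarrow> agree_on U ((C v ^^ i) f) ((C v ^^ i) g)"
  by (induction i) (auto intro: agree_C)

lemma smooth_on_bilinear_P: "smooth_on U f \<Longrightarrow> smooth_on U g \<Longrightarrow> smooth_on U (\<lambda>p. P (f p) (g p))"
  by (rule smooth_on_bilinear[OF open_U bilinear_P])

lemma C_sum_scaleR:
  assumes "finite S" and "\<And>J. J \<in> S \<Longrightarrow> smooth_on U (F J)"
  shows "agree_on U (C v (\<lambda>p. \<Sum>J\<in>S. c J *\<^sub>R F J p)) (\<lambda>p. \<Sum>J\<in>S. c J *\<^sub>R C v (F J) p)"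
  using assms
proof (induction S rule: finite_induct)
  case empty
  have "agree_on U (C v (\<lambda>p. 0 *\<^sub>R 0)) (\<lambda>p. 0 *\<^sub>R C v (\<lambda>p. 0) p)"
    by (rule scaleR_C[OF smooth_on_const[OF open_U]])
  then show ?case by simp
next
  case (insert J S)
  have "agree_on U (C v (\<lambda>p. c J *\<^sub>R F J p + (\<Sum>J\<in>S. c J *\<^sub>R F J p)))
      (\<lambda>p. C v (\<lambda>p. c J *\<^sub>R F J p) p + C v (\<lambda>p. \<Sum>J\<in>S. c J *\<^sub>R F J p) p)"
    using insert
    by (intro add_C smooth_on_sum_scaleR[OF open_U] smooth_on_linear[OF open_U bounded_linear_scaleR_right])
      auto
  also have "agree_on U \<dots> (\<lambda>p. c J *\<^sub>R C v (F J) p + (\<Sum>J\<in>S. c J *\<^sub>R C v (F J) p))"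
    using insert scaleR_C[of "F J" v "c J"] by (auto simp: agree_on_def)
  finally show ?case
    using insert(1,2) by simp
qed

lemma funpow_C_sum_scaleR:
  assumes "v \<in> V" and "finite S" and "\<And>J. J \<in> S \<Longrightarrow> smooth_on U (F J)"
  shows "agree_on U ((C v ^^ i) (\<lambda>p. \<Sum>J\<in>S. c J *\<^sub>R F J p)) (\<lambda>p. \<Sum>J\<in>S. c J *\<^sub>R (C v ^^ i) (F J) p)"
proof (induction i)
  case (Suc i)
  have "agree_on U ((C v ^^ Suc i) (\<lambda>p. \<Sum>J\<in>S. c J *\<^sub>R F J p))
      (C v (\<lambda>p. \<Sum>J\<in>S. c J *\<^sub>R (C v ^^ i) (F J) p))"
    using agree_C[OF Suc] by simp
  also have "agree_on U \<dots> (\<lambda>p. \<Sum>J\<in>S. c J *\<^sub>R (C v ^^ Suc i) (F J) p)"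
    using assms by (auto intro!: C_sum_scaleR smooth_on_funpow smooth_C)
  finally show ?case .
qed simp

lemma leibniz_funpow:
  assumes "v \<in> V" and f: "smooth_on U f" and g: "smooth_on U g"
  shows "agree_on U ((C v ^^ i) (\<lambda>p. P (f p) (g p)))
     (\<lambda>p. \<Sum>j\<le>i. real (i choose j) *\<^sub>R P ((A v ^^ j) f p) ((B v ^^ (i - j)) g p))"
proof (induction i)
  case (Suc i)
  let ?Q = "\<lambda>j p. P ((A v ^^ j) f p) ((B v ^^ (i - j)) g p)"
  have smooth_Q: "smooth_on U (?Q j)" for j
    using assms by (intro smooth_on_bilinear_P smooth_on_funpow) (auto intro: smooth_A smooth_B)
  have "agree_on U ((C v ^^ Suc i) (\<lambda>p. P (f p) (g p))) (C v (\<lambda>p. \<Sum>j\<le>i. real (i choose j) *\<^sub>R ?Q j p))"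
    using agree_C[OF Suc] by simp
  also have "agree_on U \<dots> (\<lambda>p. \<Sum>j\<le>i. real (i choose j) *\<^sub>R C v (?Q j) p)"
    by (rule C_sum_scaleR) (auto simp: smooth_Q)
  also have "agree_on U \<dots> (\<lambda>p. \<Sum>j\<le>i. real (i choose j) *\<^sub>R
      (P ((A v ^^ Suc j) f p) ((B v ^^ (i - j)) g p) + P ((A v ^^ j) f p) ((B v ^^ (Suc i - j)) g p)))"
  proof -
    have "agree_on U (C v (?Q j)) (\<lambda>p. P ((A v ^^ Suc j) f p) ((B v ^^ (i - j)) g p)
        + P ((A v ^^ j) f p) ((B v ^^ (Suc i - j)) g p))" if "j \<le> i" for j
      using product_C[OF \<open>v \<in> V\<close>, of "(A v ^^ j) f" "(B v ^^ (i - j)) g"] that assms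
      by (simp add: Suc_diff_le smooth_on_funpow smooth_A smooth_B)
    then show ?thesis
      by (auto simp: agree_on_def intro!: sum.cong)
  qed
  also have "agree_on U \<dots> (\<lambda>p. \<Sum>j\<le>Suc i. real (Suc i choose j) *\<^sub>R P ((A v ^^ j) f p) ((B v ^^ (Suc i - j)) g p))"
    unfolding agree_on_def
  proof
    fix p
    show "(\<Sum>j\<le>i. real (i choose j) *\<^sub>R (P ((A v ^^ Suc j) f p) ((B v ^^ (i - j)) g p)
          + P ((A v ^^ j) f p) ((B v ^^ (Suc i - j)) g p)))
        = (\<Sum>j\<le>Suc i. real (Suc i choose j) *\<^sub>R P ((A v ^^ j) f p) ((B v ^^ (Suc i - j)) g p))"
      by (rule sum_choose_pascal[where X="\<lambda>j k. P ((A v ^^ j) f p) ((B v ^^ k) g p)"])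
  qed
  finally show ?case .
qed (simp add: agree_on_def)

text \<open>The hypothesis on \<open>length I\<close> is needed: \<^const>\<open>compose_powers\<close> ignores the entries of \<open>I\<close>
  beyond \<open>length vs\<close>, while \<^const>\<open>subidx\<close> does not.\<close>

lemma leibniz_compose_powers:
  assumes "set vs \<subseteq> V" and "length I \<le> length vs" and f: "smooth_on U f" and g: "smooth_on U g"
  shows "agree_on U (compose_powers C vs I (\<lambda>p. P (f p) (g p)))
     (\<lambda>p. \<Sum>J\<in>subidx I. real (mbinom I J) *\<^sub>R
        P (compose_powers A vs J f p) (compose_powers B vs (idx_diff I J) g p))"
  using assms(1,2)
proof (induction vs arbitrary: I)
  case Nil
  then show ?case by (simp add: agree_on_def)
next
  case (Cons v vs)
  show ?case
  proof (cases I)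
    case Nil
    then show ?thesis by (simp add: agree_on_def)
  next
    case (Cons i I')
    have "v \<in> V" and vs: "set vs \<subseteq> V" and "length I' \<le> length vs"
      using Cons.prems \<open>I = i # I'\<close> by auto
    let ?Q = "\<lambda>J p. P (compose_powers A vs J f p) (compose_powers B vs (idx_diff I' J) g p)"
    let ?G = "\<lambda>p K. real (mbinom I K) *\<^sub>R
        P (compose_powers A (v # vs) K f p) (compose_powers B (v # vs) (idx_diff I K) g p)"
    have smooth_A': "smooth_on U (compose_powers A vs J f)" for J
      using vs f by (intro smooth_on_compose_powers) (auto intro: smooth_A)
    have smooth_B': "smooth_on U (compose_powers B vs J g)" for J
      using vs g by (intro smooth_on_compose_powers) (auto intro: smooth_B)
    have "agree_on U (compose_powers C (v # vs) I (\<lambda>p. P (f p) (g p)))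
        ((C v ^^ i) (\<lambda>p. \<Sum>J\<in>subidx I'. real (mbinom I' J) *\<^sub>R ?Q J p))"
      unfolding \<open>I = i # I'\<close> compose_powers_Cons
      by (rule agree_on_funpow_C) (rule Cons.IH[OF vs \<open>length I' \<le> length vs\<close>])
    also have "agree_on U \<dots> (\<lambda>p. \<Sum>J\<in>subidx I'. real (mbinom I' J) *\<^sub>R (C v ^^ i) (?Q J) p)"
      using smooth_A' smooth_B'
      by (intro funpow_C_sum_scaleR[OF \<open>v \<in> V\<close> finite_subidx] smooth_on_bilinear_P)
    also have "agree_on U \<dots> (\<lambda>p. \<Sum>J\<in>subidx I'. \<Sum>j\<le>i. ?G p (j # J))"
    proof -
      have "agree_on U ((C v ^^ i) (?Q J)) (\<lambda>p. \<Sum>j\<le>i. real (i choose j) *\<^sub>R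
          P ((A v ^^ j) (compose_powers A vs J f) p) ((B v ^^ (i - j)) (compose_powers B vs (idx_diff I' J) g) p))"
        for J
        by (rule leibniz_funpow[OF \<open>v \<in> V\<close> smooth_A' smooth_B'])
      then show ?thesis
        by (auto simp: agree_on_def \<open>I = i # I'\<close> scaleR_sum_right mult.commute intro!: sum.cong)
    qed
    also have "(\<lambda>p. \<Sum>J\<in>subidx I'. \<Sum>j\<le>i. ?G p (j # J)) = (\<lambda>p. \<Sum>K\<in>subidx I. ?G p K)"
    proof
      fix p
      have "inj_on (\<lambda>(j, J). j # J) ({..i} \<times> subidx I')"
        by (auto simp: inj_on_def)
      then have "(\<Sum>K\<in>subidx I. ?G p K) = (\<Sum>(j, J)\<in>{..i} \<times> subidx I'. ?G p (j # J))"
        by (simp add: \<open>I = i # I'\<close> subidx_Cons sum.reindex case_prod_unfold)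
      also have "\<dots> = (\<Sum>j\<le>i. \<Sum>J\<in>subidx I'. ?G p (j # J))"
        by (simp add: sum.cartesian_product)
      also have "\<dots> = (\<Sum>J\<in>subidx I'. \<Sum>j\<le>i. ?G p (j # J))"
        by (rule sum.swap)
      finally show "(\<Sum>J\<in>subidx I'. \<Sum>j\<le>i. ?G p (j # J)) = (\<Sum>K\<in>subidx I. ?G p K)" ..
    qed
    finally show ?thesis .
  qed
qed

end

section \<open>Dirac matrices\<close>

lemmas matrix_vector_mult_linear_simps =
  linear_simps[OF matrix_vector_mul_bounded_linear]
  linear_sum[OF matrix_vector_mul_linear, unfolded o_def]

definition cinner :: "complex^'m \<Rightarrow> complex^'m \<Rightarrow> complex" where
  "cinner u w = (\<Sum>i\<in>UNIV. cnj (u $ i) * w $ i)"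

lemma bar_eq_cinner: "bar g0 u w = cinner u (g0 *v w)"
  by (simp add: bar_def cinner_def)

lemma bounded_bilinear_cinner: "bounded_bilinear cinner"
proof -
  have "bilinear cinner"
    unfolding bilinear_def linear_iff cinner_def vector_add_component vector_scaleR_component
    by (simp add: sum.distrib algebra_simps sum_distrib_left scaleR_conv_of_real)
  then show ?thesis
    using bilinear_conv_bounded_bilinear by blast
qed

interpretation cinner: bounded_bilinear cinner
  by (rule bounded_bilinear_cinner)

lemma bounded_bilinear_bar: "bounded_bilinear (bar g0)"
  unfolding bar_eq_cinner[abs_def]
  by (rule bounded_bilinear.comp[OF bounded_bilinear_cinner bounded_linear_ident matrix_vector_mul_bounded_linear])

lemma cinner_matrix_vector_mult_left: "cinner (M *v u) w = cinner u (adj M *v w)"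
proof -
  have "cinner (M *v u) w = (\<Sum>i\<in>UNIV. \<Sum>j\<in>UNIV. cnj (M$i$j) * cnj (u$j) * w$i)"
    by (simp add: cinner_def matrix_vector_mult_def sum_distrib_right)
  also have "\<dots> = (\<Sum>j\<in>UNIV. \<Sum>i\<in>UNIV. cnj (M$i$j) * cnj (u$j) * w$i)"
    by (rule sum.swap)
  also have "\<dots> = cinner u (adj M *v w)"
    by (simp add: cinner_def matrix_vector_mult_def adj_def sum_distrib_left mult_ac)
  finally show ?thesis .
qed

lemma cinner_self: "cinner w w = of_real ((norm w)\<^sup>2)"
proof -
  have "cinner w w = of_real (\<Sum>i\<in>UNIV. (norm (w$i))\<^sup>2)"
    unfolding cinner_def of_real_sum by (intro sum.cong refl) (simp only: complex_norm_square mult.commute)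
  then show ?thesis
    by (simp add: norm_vec_def L2_set_def sum_nonneg)
qed

lemma norm_cinner_le: "norm (cinner u w) \<le> norm u * norm w"
proof -
  have "norm (cinner u w) \<le> (\<Sum>i\<in>UNIV. norm (cnj (u $ i) * w $ i))"
    unfolding cinner_def by (rule norm_sum)
  also have "\<dots> = (\<Sum>i\<in>UNIV. \<bar>norm (u $ i)\<bar> * \<bar>norm (w $ i)\<bar>)"
    by (simp add: norm_mult)
  also have "\<dots> \<le> L2_set (\<lambda>i. norm (u $ i)) UNIV * L2_set (\<lambda>i. norm (w $ i)) UNIV"
    by (rule L2_set_mult_ineq)
  finally show ?thesis
    by (simp add: norm_vec_def)
qed

lemma norm_matrix_vector_mult_unitary:
  assumes "\<And>x. adj M *v (M *v x) = x"
  shows "norm (M *v w) = norm w"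
proof -
  have "cinner (M *v w) (M *v w) = cinner w w"
    by (simp add: cinner_matrix_vector_mult_left assms)
  then have "(norm (M *v w))\<^sup>2 = (norm w)\<^sup>2"
    by (simp only: cinner_self of_real_eq_iff)
  then show ?thesis
    by simp
qed

lemma scaleR_matrix_vector_mult: "(c *\<^sub>R A) *v (w::complex^'m) = c *\<^sub>R (A *v w)"
  by (simp add: vec_eq_iff matrix_vector_mult_def scaleR_sum_right)

lemma uminus_matrix_vector_mult: "(- A) *v (w::complex^'m) = - (A *v w)"
  by (simp add: vec_eq_iff matrix_vector_mult_def sum_negf)

lemma anticommutator_apply:
  assumes "A ** B + B ** A = c *\<^sub>R mat 1"
  shows "A *v (B *v w) + B *v (A *v (w::complex^'m)) = c *\<^sub>R w"
  using arg_cong[OF assms, of "\<lambda>M. M *v w"]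
  by (simp add: matrix_vector_mult_add_rdistrib matrix_vector_mul_assoc scaleR_matrix_vector_mult)

lemma anticommutator_apply_self:
  assumes "A ** A + A ** A = c *\<^sub>R mat 1"
  shows "A *v (A *v (w::complex^'m)) = (c / 2) *\<^sub>R w"
proof -
  have "A *v (A *v w) = (1/2) *\<^sub>R (A *v (A *v w) + A *v (A *v w))"
    by simp
  then show ?thesis
    by (simp add: anticommutator_apply[OF assms])
qed

context
  fixes g0 :: "complex^'m^'m" and g :: "'n::finite \<Rightarrow> complex^'m^'m"
  assumes dirac: "dirac g0 g"
begin

lemma gamma0_gamma0: "g0 *v (g0 *v w) = w"
  using anticommutator_apply_self[of g0 2 w] dirac by (simp add: dirac_def)

lemma gamma_gamma: "g a *v (g a *v w) = - w"
proof -
  have "g a ** g a + g a ** g a = (-2) *\<^sub>R mat 1"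
    using dirac unfolding dirac_def by metis
  from anticommutator_apply_self[OF this] show ?thesis
    by simp
qed

lemma gamma_anticommutator:
  "g a *v (g b *v w) + g b *v (g a *v w) = (if a = b then -2 else 0) *\<^sub>R w"
proof -
  have "g a ** g b + g b ** g a = (if a = b then -2 else 0) *\<^sub>R mat 1"
    using dirac by (simp add: dirac_def)
  then show ?thesis
    by (rule anticommutator_apply)
qed

lemma gamma0_gamma_anticomm: "g0 *v (g a *v w) = - (g a *v (g0 *v w))"
  using anticommutator_apply[of g0 "g a" 0 w] dirac by (simp add: dirac_def eq_neg_iff_add_eq_0)

lemma gamma_anticomm: "a \<noteq> b \<Longrightarrow> g a *v (g b *v w) = - (g b *v (g a *v w))"
  using gamma_anticommutator[of a b w] by (simp add: eq_neg_iff_add_eq_0)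

lemma gamma_slash_square:
  "(\<Sum>a\<in>UNIV. c a *\<^sub>R (g a *v (\<Sum>b\<in>UNIV. c b *\<^sub>R (g b *v w)))) = - (\<Sum>a\<in>UNIV. (c a)\<^sup>2) *\<^sub>R w"
    (is "?S = _")
proof -
  have S: "?S = (\<Sum>a\<in>UNIV. \<Sum>b\<in>UNIV. (c a * c b) *\<^sub>R (g a *v (g b *v w)))"
    by (simp add: matrix_vector_mult_linear_simps scaleR_sum_right)
  also have "\<dots> = (\<Sum>a\<in>UNIV. \<Sum>b\<in>UNIV. (c a * c b) *\<^sub>R (g b *v (g a *v w)))"
    by (subst sum.swap) (simp only: mult.commute)
  finally have "?S + ?S = (\<Sum>a\<in>UNIV. \<Sum>b\<in>UNIV. (c a * c b) *\<^sub>R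
      (g a *v (g b *v w) + g b *v (g a *v w)))"
    by (simp add: S scaleR_add_right sum.distrib)
  also have "\<dots> = (\<Sum>a\<in>UNIV. \<Sum>b\<in>UNIV. if b = a then (-2 * (c a)\<^sup>2) *\<^sub>R w else 0)"
    by (intro sum.cong refl) (auto simp: gamma_anticommutator power2_eq_square)
  also have "\<dots> = (\<Sum>a\<in>UNIV. (-2 * (c a)\<^sup>2) *\<^sub>R w)"
    by simp
  finally have "?S + ?S = (-2 * (\<Sum>a\<in>UNIV. (c a)\<^sup>2)) *\<^sub>R w"
    by (simp add: scaleR_sum_left sum_distrib_left)
  then show ?thesis
    using scaleR_half_double[of ?S] by simp
qed

lemma cinner_gamma0_left: "cinner (g0 *v u) w = cinner u (g0 *v w)"
  using dirac by (simp add: cinner_matrix_vector_mult_left dirac_def)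

lemma cinner_gamma_left: "cinner (g a *v u) w = - cinner u (g a *v w)"
  using dirac by (simp add: cinner_matrix_vector_mult_left dirac_def uminus_matrix_vector_mult
      cinner.minus_right)

lemma norm_gamma0: "norm (g0 *v w) = norm w"
  using dirac by (intro norm_matrix_vector_mult_unitary) (simp add: dirac_def gamma0_gamma0)

lemma norm_gamma: "norm (g a *v w) = norm w"
  using dirac by (intro norm_matrix_vector_mult_unitary)
    (simp add: dirac_def gamma_gamma uminus_matrix_vector_mult matrix_vector_mult_linear_simps)

lemma norm_gamma_sum_le:
  "norm (\<Sum>a\<in>UNIV. g a *v v a) \<le> real CARD('n) * sqrt (\<Sum>a\<in>UNIV. (norm (v a))\<^sup>2)"
proof -
  have "norm (\<Sum>a\<in>UNIV. g a *v v a) \<le> (\<Sum>a\<in>UNIV. norm (v a))"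
    using norm_sum[of "\<lambda>a. g a *v v a" UNIV] by (simp add: norm_gamma)
  also have "\<dots> \<le> (\<Sum>a\<in>(UNIV::'n set). L2_set (\<lambda>a. norm (v a)) UNIV)"
    by (intro sum_mono member_le_L2_set) auto
  finally show ?thesis
    by (simp add: L2_set_def)
qed

lemma norm_bar_le: "norm (bar g0 u w) \<le> norm u * norm w"
  using norm_cinner_le[of u "g0 *v w"] by (simp add: bar_eq_cinner norm_gamma0)

lemma bar_gamma0_gamma_skew: "bar g0 ((g0 ** g a) *v u) w + bar g0 u ((g0 ** g a) *v w) = 0"
  by (simp add: bar_eq_cinner flip: matrix_vector_mul_assoc)
    (simp add: cinner_gamma0_left cinner_gamma_left gamma0_gamma0)

lemma bar_gamma_gamma_skew:
  assumes "a \<noteq> b"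
  shows "bar g0 ((g a ** g b) *v u) w + bar g0 u ((g a ** g b) *v w) = 0"
proof -
  have "g0 *v (g a *v (g b *v w)) = - (g b *v (g a *v (g0 *v w)))"
    using gamma_anticomm[OF assms] by (simp add: gamma0_gamma_anticomm matrix_vector_mult_linear_simps)
  then show ?thesis
    by (simp add: bar_eq_cinner cinner_gamma_left cinner.minus_right flip: matrix_vector_mul_assoc)
qed

end

section \<open>The vector fields\<close>

lemma vf_app_dderiv:
  "vf_app VT f = dderiv (1, 0) f"
  "vf_app (VX a) f = dderiv (0, axis a 1) f"
  "vf_app (VL a) f = (\<lambda>p. (snd p $ a) *\<^sub>R dderiv (1, 0) f p + fst p *\<^sub>R dderiv (0, axis a 1) f p)"
  "vf_app (VO a b) f = (\<lambda>p. (snd p $ a) *\<^sub>R dderiv (0, axis b 1) f p - (snd p $ b) *\<^sub>R dderiv (0, axis a 1) f p)"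
  by (auto simp: dt_def dx_def)

lemma hvf_app_vf_app:
  "hvf_app g0 g VT f = vf_app VT f"
  "hvf_app g0 g (VX a) f = vf_app (VX a) f"
  "hvf_app g0 g (VL a) f = (\<lambda>p. vf_app (VL a) f p - (1/2::real) *\<^sub>R ((g0 ** g a) *v f p))"
  "hvf_app g0 g (VO a b) f = (\<lambda>p. vf_app (VO a b) f p - (1/2::real) *\<^sub>R ((g a ** g b) *v f p))"
  by (auto simp del: vf_app.simps)

lemma smooth_on_vf_app:
  fixes f :: "'n::finite pt \<Rightarrow> 'b::real_normed_vector"
  assumes "open U" and f: "smooth_on U f"
  shows "smooth_on U (vf_app v f)"
proof -
  have "bounded_linear (\<lambda>p::'n pt. snd p $ a)" for a
    by (rule bounded_linear_compose[OF bounded_linear_vec_nth bounded_linear_snd])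
  then have coord: "smooth_on U (\<lambda>p::'n pt. snd p $ a)" for a
    by (rule smooth_on_bounded_linear[OF \<open>open U\<close>])
  have time: "smooth_on U (\<lambda>p::'n pt. fst p)"
    by (rule smooth_on_bounded_linear[OF \<open>open U\<close> bounded_linear_fst])
  have "smooth_on U (\<lambda>p. c p *\<^sub>R dderiv w f p)" if "smooth_on U c" for c w
    by (rule smooth_on_bilinear[OF \<open>open U\<close> bounded_bilinear_scaleR that smooth_on_dderiv[OF f]])
  then show ?thesis
    by (cases v) (auto simp only: vf_app_dderiv intro!: smooth_on_dderiv[OF f] coord time
        smooth_on_add[OF \<open>open U\<close>] smooth_on_diff[OF \<open>open U\<close>])
qed

lemma smooth_on_hvf_app:
  assumes "open U" and f: "smooth_on U f"
  shows "smooth_on U (hvf_app g0 g v f)"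
proof -
  have "smooth_on U (\<lambda>p. (1/2::real) *\<^sub>R (M *v f p))" for M
    by (intro smooth_on_linear[OF \<open>open U\<close> bounded_linear_scaleR_right]
        smooth_on_linear[OF \<open>open U\<close> matrix_vector_mul_bounded_linear f])
  then show ?thesis
    by (cases v) (auto simp only: hvf_app_vf_app intro!: smooth_on_vf_app[OF assms]
        smooth_on_diff[OF \<open>open U\<close> smooth_on_vf_app[OF assms]])
qed

lemma agree_on_vf_app:
  assumes "open U" and "agree_on U f g"
  shows "agree_on U (vf_app v f) (vf_app v g)"
  using agree_on_dderiv[OF assms] by (cases v) (auto simp: agree_on_def dt_def dx_def)

lemma agree_on_hvf_app:
  assumes "open U" and "agree_on U f1 f2"
  shows "agree_on U (hvf_app g0 g v f1) (hvf_app g0 g v f2)"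
  using agree_on_vf_app[OF assms, of v] assms(2)
  by (cases v) (auto simp: agree_on_def simp del: vf_app.simps)

lemma vf_app_bilinear:
  assumes P: "bounded_bilinear P" and "f differentiable (at p)" and "g differentiable (at p)"
  shows "vf_app v (\<lambda>q. P (f q) (g q)) p = P (vf_app v f p) (g p) + P (f p) (vf_app v g p)"
proof -
  have "dderiv w (\<lambda>q. P (f q) (g q)) p = P (dderiv w f p) (g p) + P (f p) (dderiv w g p)" for w
    using bounded_bilinear.FDERIV[OF P has_derivative_dderiv[OF assms(2)] has_derivative_dderiv[OF assms(3)]]
    by (simp add: dderiv_eq_derivative add.commute)
  then show ?thesis
    by (cases v) (simp_all add: dt_def dx_def bounded_bilinear.add_left[OF P] bounded_bilinear.add_right[OF P]
        bounded_bilinear.diff_left[OF P] bounded_bilinear.diff_right[OF P]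
        bounded_bilinear.scaleR_left[OF P] bounded_bilinear.scaleR_right[OF P] algebra_simps)
qed

lemma vf_app_linear:
  assumes L: "bounded_linear L" and "f differentiable (at p)"
  shows "vf_app v (\<lambda>q. L (f q)) p = L (vf_app v f p)"
proof -
  have "dderiv w (\<lambda>q. L (f q)) p = L (dderiv w f p)" for w
    using bounded_linear.has_derivative[OF L has_derivative_dderiv[OF assms(2)]]
    by (simp add: dderiv_eq_derivative)
  then show ?thesis
    by (cases v) (simp_all add: dt_def dx_def linear_simps[OF L])
qed

lemma vf_app_add:
  assumes "f differentiable (at p)" and "g differentiable (at p)"
  shows "vf_app v (\<lambda>q. f q + g q) p = vf_app v f p + vf_app v g p"
proof -
  have "dderiv w (\<lambda>q. f q + g q) p = dderiv w f p + dderiv w g p" for w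
    using has_derivative_add[OF has_derivative_dderiv[OF assms(1)] has_derivative_dderiv[OF assms(2)]]
    by (simp add: dderiv_eq_derivative)
  then show ?thesis
    by (cases v) (simp_all add: dt_def dx_def algebra_simps)
qed

lemma leibniz_rule_scaleR:
  fixes g0 :: "complex^'m^'m" and g :: "'n::finite \<Rightarrow> complex^'m^'m"
  assumes "open U"
  shows "leibniz_rule U UNIV vf_app (hvf_app g0 g) (hvf_app g0 g) (scaleR :: real \<Rightarrow> complex^'m \<Rightarrow> _)"
proof (rule leibniz_rule.intro)
  fix v :: "'n vf" and f1 f2 :: "'n pt \<Rightarrow> complex^'m"
  assume "smooth_on U f1" "smooth_on U f2"
  then show "agree_on U (hvf_app g0 g v (\<lambda>p. f1 p + f2 p)) (\<lambda>p. hvf_app g0 g v f1 p + hvf_app g0 g v f2 p)"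
    using vf_app_add[OF smooth_on_differentiable_at[OF \<open>open U\<close>] smooth_on_differentiable_at[OF \<open>open U\<close>]]
    by (cases v) (auto simp: agree_on_def matrix_vector_mult_linear_simps algebra_simps simp del: vf_app.simps)
next
  fix v :: "'n vf" and c :: real and f :: "'n pt \<Rightarrow> complex^'m"
  assume "smooth_on U f"
  then show "agree_on U (hvf_app g0 g v (\<lambda>p. c *\<^sub>R f p)) (\<lambda>p. c *\<^sub>R hvf_app g0 g v f p)"
    using vf_app_linear[OF bounded_linear_scaleR_right smooth_on_differentiable_at[OF \<open>open U\<close>]]
    by (cases v) (auto simp: agree_on_def matrix_vector_mult_linear_simps algebra_simps simp del: vf_app.simps)
next
  fix v :: "'n vf" and u :: "'n pt \<Rightarrow> real" and f :: "'n pt \<Rightarrow> complex^'m"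
  assume "smooth_on U u" "smooth_on U f"
  then show "agree_on U (hvf_app g0 g v (\<lambda>p. u p *\<^sub>R f p)) (\<lambda>p. vf_app v u p *\<^sub>R f p + u p *\<^sub>R hvf_app g0 g v f p)"
    using vf_app_bilinear[OF bounded_bilinear_scaleR
        smooth_on_differentiable_at[OF \<open>open U\<close>] smooth_on_differentiable_at[OF \<open>open U\<close>]]
    by (cases v) (auto simp: agree_on_def matrix_vector_mult_linear_simps algebra_simps simp del: vf_app.simps)
qed (auto simp: assms smooth_on_vf_app smooth_on_hvf_app agree_on_hvf_app bounded_bilinear_scaleR)

lemma leibniz_rule_bar:
  fixes g0 :: "complex^'m^'m" and g :: "'n::finite \<Rightarrow> complex^'m^'m"
  assumes "open U" and dirac: "dirac g0 g"
  shows "leibniz_rule U (- range (\<lambda>a. VO a a)) (hvf_app g0 g) (hvf_app g0 g) vf_app (bar g0)"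
proof (rule leibniz_rule.intro)
  fix v :: "'n vf" and f1 f2 :: "'n pt \<Rightarrow> complex"
  assume "smooth_on U f1" "smooth_on U f2"
  then show "agree_on U (vf_app v (\<lambda>p. f1 p + f2 p)) (\<lambda>p. vf_app v f1 p + vf_app v f2 p)"
    using vf_app_add[OF smooth_on_differentiable_at[OF \<open>open U\<close>] smooth_on_differentiable_at[OF \<open>open U\<close>]]
    by (auto simp: agree_on_def)
next
  fix v :: "'n vf" and c :: real and f :: "'n pt \<Rightarrow> complex"
  assume "smooth_on U f"
  then show "agree_on U (vf_app v (\<lambda>p. c *\<^sub>R f p)) (\<lambda>p. c *\<^sub>R vf_app v f p)"
    using vf_app_linear[OF bounded_linear_scaleR_right smooth_on_differentiable_at[OF \<open>open U\<close>]]
    by (auto simp: agree_on_def)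
next
  interpret bar: bounded_bilinear "bar g0"
    by (rule bounded_bilinear_bar)
  fix v :: "'n vf" and f h :: "'n pt \<Rightarrow> complex^'m"
  assume v: "v \<in> - range (\<lambda>a. VO a a)" and "smooth_on U f" "smooth_on U h"
  then have product: "vf_app v (\<lambda>q. bar g0 (f q) (h q)) p = bar g0 (vf_app v f p) (h p) + bar g0 (f p) (vf_app v h p)"
    if "p \<in> U" for p
    using that by (intro vf_app_bilinear[OF bounded_bilinear_bar] smooth_on_differentiable_at[OF \<open>open U\<close>])
  have skew: "bar g0 (M *v f p) (h p) + bar g0 (f p) (M *v h p) = 0"
    if "v = VL a \<and> M = g0 ** g a \<or> v = VO a b \<and> M = g a ** g b" for M a b p
    using that v bar_gamma0_gamma_skew[OF dirac] bar_gamma_gamma_skew[OF dirac] by (auto simp: image_iff)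
  show "agree_on U (vf_app v (\<lambda>p. bar g0 (f p) (h p)))
     (\<lambda>p. bar g0 (hvf_app g0 g v f p) (h p) + bar g0 (f p) (hvf_app g0 g v h p))"
    unfolding agree_on_def
  proof
    fix p assume "p \<in> U"
    show "vf_app v (\<lambda>p. bar g0 (f p) (h p)) p = bar g0 (hvf_app g0 g v f p) (h p) + bar g0 (f p) (hvf_app g0 g v h p)"
      using product[OF \<open>p \<in> U\<close>] skew[of _ _ _ p]
      by (cases v) (auto simp: bar.diff_left bar.diff_right bar.scaleR_left bar.scaleR_right algebra_simps
          simp del: vf_app.simps simp flip: scaleR_add_right)
  qed
qed (auto simp: assms smooth_on_vf_app smooth_on_hvf_app agree_on_vf_app bounded_bilinear_bar)

lemma list_comprehension_product:
  "[f a b. a \<leftarrow> xs, b \<leftarrow> ys, P a b] = map (case_prod f) (filter (case_prod P) (List.product xs ys))"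
proof (induction xs)
  case (Cons x xs)
  have "[f x b. b \<leftarrow> ys, P x b] = map (case_prod f) (filter (case_prod P) (map (Pair x) ys))"
    by (induction ys) auto
  with Cons show ?case by simp
qed simp

lemma card_less_pairs:
  "2 * card {(a, b). (a::'a::{finite,linorder}) < b} + CARD('a) = CARD('a) * CARD('a)"
proof -
  let ?P = "{(a, b). (a::'a) < b}"
  have UNIV_split: "UNIV = (?P \<union> prod.swap ` ?P) \<union> range (\<lambda>a. (a, a))"
    by (auto simp: image_iff neq_iff)
  have "CARD('a \<times> 'a) = card (?P \<union> prod.swap ` ?P) + card (range (\<lambda>a::'a. (a, a)))"
    unfolding UNIV_split by (rule card_Un_disjoint) auto
  also have "card (?P \<union> prod.swap ` ?P) = card ?P + card (prod.swap ` ?P)"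
    by (rule card_Un_disjoint) auto
  also have "card (prod.swap ` ?P) = card ?P"
    by (rule card_image) simp
  also have "card (range (\<lambda>a::'a. (a, a))) = CARD('a)"
    by (rule card_image) (simp add: inj_on_def)
  finally show ?thesis
    by (simp add: card_cartesian_product flip: UNIV_Times_UNIV)
qed

lemma length_vf_list: "length (vf_list :: 'n::{finite,linorder} vf list) = n0 CARD('n)"
proof -
  define xs where "xs = sorted_list_of_set (UNIV :: 'n set)"
  have xs: "distinct xs" "set xs = UNIV" "length xs = CARD('n)"
    by (simp_all add: xs_def)
  have "length [VO a b. a \<leftarrow> xs, b \<leftarrow> xs, a < b] = card {(a, b). (a::'n) < b}"
    using xs by (simp add: list_comprehension_product distinct_length_filter distinct_product
        case_prod_unfold Int_def)
  then have "2 * length (vf_list :: 'n vf list) = CARD('n)\<^sup>2 + 3 * CARD('n) + 2"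
    using card_less_pairs[where 'a='n] xs by (simp add: vf_list_def Let_def xs_def power2_eq_square)
  then show ?thesis
    by (simp add: n0_def)
qed

lemma set_vf_list: "set vf_list \<subseteq> - range (\<lambda>a. VO a a)"
  by (auto simp: vf_list_def Let_def)

lemma hGamI_scaleR_leibniz:
  assumes "open U" and "p \<in> U" and "smooth_on U u" and "smooth_on U f"
    and "length I \<le> length (vf_list :: 'n::{finite,linorder} vf list)"
  shows "hGamI g0 g I (\<lambda>q. u q *\<^sub>R f q) p =
    (\<Sum>J\<in>subidx I. real (mbinom I J) *\<^sub>R (GamI J u p *\<^sub>R hGamI g0 g (idx_diff I J) (f :: 'n pt \<Rightarrow> complex^'m) p))"
  using leibniz_rule.leibniz_compose_powers[OF leibniz_rule_scaleR[OF \<open>open U\<close>] _ assms(5,3,4)] \<open>p \<in> U\<close>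
  by (simp add: agree_on_def GamI_eq_compose_powers hGamI_eq_compose_powers)

lemma GamI_bar_leibniz:
  assumes "dirac g0 g" and "open U" and "p \<in> U" and "smooth_on U f" and "smooth_on U h"
    and "length I \<le> length (vf_list :: 'n::{finite,linorder} vf list)"
  shows "GamI I (\<lambda>q. bar g0 (f q) (h q)) p =
    (\<Sum>J\<in>subidx I. of_nat (mbinom I J) * bar g0 (hGamI g0 g J f p) (hGamI g0 g (idx_diff I J) (h :: 'n pt \<Rightarrow> _) p))"
  using leibniz_rule.leibniz_compose_powers[OF leibniz_rule_bar[OF \<open>open U\<close> \<open>dirac g0 g\<close>] set_vf_list assms(6,4,5)]
    \<open>p \<in> U\<close>
  by (simp add: agree_on_def GamI_eq_compose_powers hGamI_eq_compose_powers scaleR_conv_of_real)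

section \<open>Estimates for the projections\<close>

lemma norm_smult_imaginary_unit: "norm (\<i> *s (v::complex^'m)) = norm v"
  by (simp add: norm_vec_def norm_mult)

definition gamma0_gamma :: "complex^'m^'m \<Rightarrow> ('n::finite \<Rightarrow> complex^'m^'m) \<Rightarrow> ('n \<Rightarrow> real)
    \<Rightarrow> complex^'m \<Rightarrow> complex^'m" where
  "gamma0_gamma g0 g c w = (\<Sum>a\<in>UNIV. c a *\<^sub>R ((g0 ** g a) *v w))"

lemma minus_r_eq: "minus_r g0 g p w = w - gamma0_gamma g0 g (\<lambda>a. snd p $ a / rad p) w"
  by (simp add: minus_r_def gamma0_gamma_def)

lemma minus_t_eq: "minus_t g0 g p w = w - gamma0_gamma g0 g (\<lambda>a. snd p $ a / fst p) w"
  by (simp add: minus_t_def gamma0_gamma_def)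

lemma gamma0_gamma_eq: "gamma0_gamma g0 g c w = g0 *v (\<Sum>a\<in>UNIV. c a *\<^sub>R (g a *v w))"
  by (simp add: gamma0_gamma_def matrix_vector_mult_linear_simps flip: matrix_vector_mul_assoc)

lemma gamma0_gamma_linear_simps:
  "gamma0_gamma g0 g c (u + w) = gamma0_gamma g0 g c u + gamma0_gamma g0 g c w"
  "gamma0_gamma g0 g c (u - w) = gamma0_gamma g0 g c u - gamma0_gamma g0 g c w"
  by (simp_all add: gamma0_gamma_def matrix_vector_mult_linear_simps scaleR_add_right
      scaleR_diff_right sum.distrib sum_subtractf)

lemma gamma0_gamma_smult: "gamma0_gamma g0 g c (k *s w) = k *s gamma0_gamma g0 g c w"
  by (simp add: gamma0_gamma_def vec_eq_iff vector_scalar_commute sum_distrib_left mult_scaleR_right)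

context
  fixes g0 :: "complex^'m^'m" and g :: "'n::finite \<Rightarrow> complex^'m^'m"
  assumes dirac: "dirac g0 g"
begin

lemma bar_gamma0_gamma_skew_sum: "bar g0 (gamma0_gamma g0 g c u) w + bar g0 u (gamma0_gamma g0 g c w) = 0"
proof -
  interpret bar: bounded_bilinear "bar g0"
    by (rule bounded_bilinear_bar)
  have "bar g0 (gamma0_gamma g0 g c u) w + bar g0 u (gamma0_gamma g0 g c w)
      = (\<Sum>a\<in>UNIV. c a *\<^sub>R (bar g0 ((g0 ** g a) *v u) w + bar g0 u ((g0 ** g a) *v w)))"
    by (simp add: gamma0_gamma_def bar.sum_left bar.sum_right bar.scaleR_left bar.scaleR_right
        scaleR_add_right sum.distrib)
  then show ?thesis
    by (simp add: bar_gamma0_gamma_skew[OF dirac])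
qed

lemma norm_bar_le_gamma0_gamma:
  fixes c :: "'n \<Rightarrow> real"
  defines "K \<equiv> gamma0_gamma g0 g c"
  shows "norm (bar g0 u w) \<le> norm (u - K u) * norm w + norm u * norm (w - K w)"
proof -
  interpret bar: bounded_bilinear "bar g0"
    by (rule bounded_bilinear_bar)
  have "bar g0 (K u) w = - bar g0 u (K w)"
    using bar_gamma0_gamma_skew_sum[of c u w] by (simp add: K_def eq_neg_iff_add_eq_0)
  then have "2 * bar g0 u w = bar g0 (u - K u) w + bar g0 u (w - K w)"
    by (simp add: bar.diff_left bar.diff_right)
  then have "2 * norm (bar g0 u w) \<le> norm (bar g0 (u - K u) w) + norm (bar g0 u (w - K w))"
    by (metis norm_mult norm_numeral norm_triangle_ineq)
  with norm_bar_le[OF dirac, of "u - K u" w] norm_bar_le[OF dirac, of u "w - K w"] show ?thesis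
    using norm_ge_zero[of "bar g0 u w"] by linarith
qed

lemma gamma0_gamma_fixes:
  fixes x :: "complex^'m" and c :: "'n \<Rightarrow> real"
  assumes "(\<Sum>a\<in>UNIV. (c a)\<^sup>2) = 1"
  defines "z \<equiv> g0 *v x - (\<Sum>b\<in>UNIV. c b *\<^sub>R (g b *v x))"
  shows "gamma0_gamma g0 g c z = z"
proof -
  have "gamma0_gamma g0 g c (g0 *v x) = - (\<Sum>b\<in>UNIV. c b *\<^sub>R (g b *v x))"
    by (simp add: gamma0_gamma_def gamma0_gamma_anticomm[OF dirac] gamma0_gamma0[OF dirac]
        sum_negf flip: matrix_vector_mul_assoc)
  moreover have "gamma0_gamma g0 g c (\<Sum>b\<in>UNIV. c b *\<^sub>R (g b *v x)) = - (g0 *v x)"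
    unfolding gamma0_gamma_eq gamma_slash_square[OF dirac] assms(1)
    by (simp add: matrix_vector_mult_linear_simps)
  ultimately show ?thesis
    by (simp add: z_def gamma0_gamma_linear_simps)
qed

lemma norm_gamma0_gamma_le:
  assumes "\<And>a. \<bar>c a\<bar> \<le> 1"
  shows "norm (gamma0_gamma g0 g c w) \<le> real CARD('n) * norm w"
proof -
  have "norm (gamma0_gamma g0 g c w) \<le> (\<Sum>a\<in>UNIV. \<bar>c a\<bar> * norm w)"
    unfolding gamma0_gamma_def
    using norm_sum[of "\<lambda>a. c a *\<^sub>R ((g0 ** g a) *v w)" UNIV]
    by (simp add: norm_gamma0[OF dirac] norm_gamma[OF dirac] flip: matrix_vector_mul_assoc)
  also have "\<dots> \<le> (\<Sum>a\<in>(UNIV::'n set). norm w)"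
    by (intro sum_mono) (simp add: assms mult_left_le_one_le)
  finally show ?thesis
    by simp
qed

lemma norm_minus_gamma0_gamma_dirac_le:
  fixes c :: "'n \<Rightarrow> real" and D0 :: "complex^'m" and D :: "'n \<Rightarrow> complex^'m"
  assumes unit: "(\<Sum>a\<in>UNIV. (c a)\<^sup>2) = 1" and bounded: "\<And>a. \<bar>c a\<bar> \<le> 1"
  defines "z \<equiv> \<i> *s (g0 *v D0 + (\<Sum>a\<in>UNIV. g a *v D a))"
  shows "norm (z - gamma0_gamma g0 g c z)
      \<le> (1 + real CARD('n)) * real CARD('n) * sqrt (\<Sum>a\<in>UNIV. (norm (D a + c a *\<^sub>R D0))\<^sup>2)"
proof -
  define G where "G = (\<Sum>a\<in>UNIV. g a *v (D a + c a *\<^sub>R D0))"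
  define Z where "Z = g0 *v D0 - (\<Sum>b\<in>UNIV. c b *\<^sub>R (g b *v D0))"
  have "z = \<i> *s (G + Z)"
    by (simp add: z_def G_def Z_def matrix_vector_mult_linear_simps sum.distrib)
  moreover have "gamma0_gamma g0 g c Z = Z"
    unfolding Z_def by (rule gamma0_gamma_fixes[OF unit])
  ultimately have "z - gamma0_gamma g0 g c z = \<i> *s (G - gamma0_gamma g0 g c G)"
    by (simp add: gamma0_gamma_linear_simps gamma0_gamma_smult vector_ssub_ldistrib)
  then have "norm (z - gamma0_gamma g0 g c z) = norm (G - gamma0_gamma g0 g c G)"
    by (simp only: norm_smult_imaginary_unit)
  also have "\<dots> \<le> norm G + real CARD('n) * norm G"
    using norm_triangle_ineq4[of G "gamma0_gamma g0 g c G"]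
      norm_gamma0_gamma_le[where c=c and w=G, OF bounded]
    by linarith
  also have "\<dots> = (1 + real CARD('n)) * norm G"
    by (simp add: algebra_simps)
  also have "norm G \<le> real CARD('n) * sqrt (\<Sum>a\<in>UNIV. (norm (D a + c a *\<^sub>R D0))\<^sup>2)"
    unfolding G_def by (rule norm_gamma_sum_le[OF dirac])
  finally show ?thesis
    by (simp add: mult_left_mono mult.assoc)
qed

end

lemma unit_direction:
  fixes x :: "real^'n::finite"
  assumes "x \<noteq> 0"
  shows "(\<Sum>a\<in>UNIV. (x $ a / norm x)\<^sup>2) = 1" and "\<bar>x $ a / norm x\<bar> \<le> 1"
proof -
  have "(\<Sum>a\<in>UNIV. (x $ a / norm x)\<^sup>2) = (\<Sum>a\<in>UNIV. (x $ a)\<^sup>2) / (norm x)\<^sup>2"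
    by (simp add: power_divide sum_divide_distrib)
  also have "(\<Sum>a\<in>UNIV. (x $ a)\<^sup>2) = (norm x)\<^sup>2"
    by (simp add: norm_vec_def L2_set_def sum_nonneg)
  finally show "(\<Sum>a\<in>UNIV. (x $ a / norm x)\<^sup>2) = 1"
    using assms by simp
  have "\<bar>x $ a\<bar> \<le> norm x" and "0 < norm x"
    using assms component_le_norm_cart[of x a] by auto
  then show "\<bar>x $ a / norm x\<bar> \<le> 1"
    by (simp add: abs_divide)
qed

lemma norm_bar_le_minus_r:
  "dirac g0 g \<Longrightarrow> norm (bar g0 u w) \<le> norm (minus_r g0 g p u) * norm w + norm u * norm (minus_r g0 g p w)"
  unfolding minus_r_eq by (rule norm_bar_le_gamma0_gamma)

lemma norm_bar_le_minus_t:
  "dirac g0 g \<Longrightarrow> norm (bar g0 u w) \<le> norm (minus_t g0 g p u) * norm w + norm u * norm (minus_t g0 g p w)"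
  unfolding minus_t_eq by (rule norm_bar_le_gamma0_gamma)

lemma norm_minus_r_dirac_op_le:
  fixes g :: "'n::finite \<Rightarrow> complex^'m^'m"
  assumes "dirac g0 g" and "rad p \<noteq> 0"
  shows "norm (minus_r g0 g p (dirac_op g0 g f p)) \<le> (1 + real CARD('n)) * real CARD('n) * Gnorm f p"
  using assms unit_direction[of "snd p"]
  unfolding minus_r_eq dirac_op_def Gnorm_def rad_def
  by (intro norm_minus_gamma0_gamma_dirac_le) auto

theorem lemma2p17:
  assumes "CARD('n::{finite,linorder}) = 2 \<or> CARD('n) = 3"
    and "CARD('m::finite) = N0 CARD('n)"
  shows
  "(\<forall>(g0::complex^'m^'m) (g::'n \<Rightarrow> complex^'m^'m) U (u::'n pt \<Rightarrow> real) (f::'n pt \<Rightarrow> complex^'m) h I p.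
      dirac g0 g \<and> open U \<and> {q. fst q \<ge> 2} \<subseteq> U \<and>
      smooth_on U u \<and> smooth_on U f \<and> smooth_on U h \<and>
      length I = n0 CARD('n) \<and> fst p \<ge> 2 \<longrightarrow>
        hGamI g0 g I (\<lambda>q. u q *\<^sub>R f q) p =
          (\<Sum>J\<in>subidx I. real (mbinom I J) *\<^sub>R (GamI J u p *\<^sub>R hGamI g0 g (idx_diff I J) f p))
      \<and> GamI I (\<lambda>q. bar g0 (f q) (h q)) p =
          (\<Sum>J\<in>subidx I. of_nat (mbinom I J) *
              bar g0 (hGamI g0 g J f p) (hGamI g0 g (idx_diff I J) h p)))
   \<and> (\<exists>C>0. \<forall>(g0::complex^'m^'m) (g::'n \<Rightarrow> complex^'m^'m) U (f::'n pt \<Rightarrow> complex^'m) h p.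
      dirac g0 g \<and> open U \<and> {q. fst q \<ge> 2} \<subseteq> U \<and>
      smooth_on U f \<and> smooth_on U h \<and> fst p \<ge> 2 \<longrightarrow>
        (rad p \<noteq> 0 \<longrightarrow>
          norm (bar g0 (f p) (h p)) \<le>
            C * (norm (minus_r g0 g p (f p)) * norm (h p) + norm (f p) * norm (minus_r g0 g p (h p))))
      \<and> (rad p < fst p \<longrightarrow>
          norm (bar g0 (f p) (h p)) \<le>
            C * (norm (minus_t g0 g p (f p)) * norm (h p) + norm (f p) * norm (minus_t g0 g p (h p))
                 + \<bar>(fst p)^2 - (rad p)^2\<bar> / (fst p)^2 * norm (f p) * norm (h p)))
      \<and> (rad p \<noteq> 0 \<longrightarrow>
          norm (minus_r g0 g p (dirac_op g0 g f p)) \<le> C * Gnorm f p))"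
proof -
  let ?C = "(1 + real CARD('n)) * real CARD('n)"
  have "1 \<le> ?C"
    using mult_mono[of 1 "1 + real CARD('n)" 1 "real CARD('n)"] by simp
  then have C: "x \<le> ?C * y" if "x \<le> y" and "0 \<le> x" for x y
    using mult_right_mono[OF \<open>1 \<le> ?C\<close>, of y] that by simp
  show ?thesis
    apply (intro conjI allI impI exI[of _ ?C]; (elim conjE)?)
    subgoal by (rule hGamI_scaleR_leibniz) (auto simp: length_vf_list)
    subgoal by (rule GamI_bar_leibniz) (auto simp: length_vf_list)
    subgoal using \<open>1 \<le> ?C\<close> by linarith
    subgoal by (intro C norm_bar_le_minus_r) simp_all
    subgoal premises prems for g0 g U f h p
    proof (rule C)
      have "0 \<le> \<bar>(fst p)\<^sup>2 - (rad p)\<^sup>2\<bar> / (fst p)\<^sup>2 * norm (f p) * norm (h p)"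
        by (intro mult_nonneg_nonneg divide_nonneg_nonneg) simp_all
      with norm_bar_le_minus_t[OF prems(2), of "f p" "h p" p] show "norm (bar g0 (f p) (h p)) \<le>
          norm (minus_t g0 g p (f p)) * norm (h p) + norm (f p) * norm (minus_t g0 g p (h p))
          + \<bar>(fst p)\<^sup>2 - (rad p)\<^sup>2\<bar> / (fst p)\<^sup>2 * norm (f p) * norm (h p)"
        by linarith
    qed simp
    subgoal by (rule norm_minus_r_dirac_op_le)
    done
qed

end
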